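(* There exists a family $(L_n)_{n\ge2}$ of $\omega$-languages, $L_n$ over an alphabet with $n$ letters, such that for every $n\ge 2$, $L_n$ is recognized by a limit-deterministic Büchi automaton with $3n+2$ states, but $L_n$ is not recognized by any deterministic parity automaton with fewer than $n!$ states.
   Context: A limit-deterministic Büchi automaton (LDBA) is a nondeterministic Büchi automaton $(Q,q_0,\Sigma,\delta,\alpha)$ together with $Q_d\subseteq Q$ such that all accepting transitions are within $Q_d$, the transition relation is deterministic on $Q_d$, and $Q_d$ is closed under successors. A deterministic parity automaton has a deterministic transition function and a coloring of transitions by positive integers; a word is accepted iff the minimal color seen infinitely often on its run is even. *)

theory Defs
  imports Main
begin

type_synonym 'a oword = "nat \<Rightarrow> 'a"

definition words :: "'a set \<Rightarrow> 'a oword set" where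
  "words \<Sigma> = {w. \<forall>i. w i \<in> \<Sigma>}"

record ('q, 'a) nba =
  nba_states :: "'q set"
  nba_init :: 'q
  nba_alpha :: "'a set"
  nba_trans :: "('q \<times> 'a \<times> 'q) set"
  nba_acc :: "('q \<times> 'a \<times> 'q) set"

definition nba_wf :: "('q, 'a) nba \<Rightarrow> bool" where
  "nba_wf A \<longleftrightarrow> finite (nba_states A) \<and> finite (nba_alpha A) \<and>
     nba_init A \<in> nba_states A \<and>
     nba_trans A \<subseteq> nba_states A \<times> nba_alpha A \<times> nba_states A \<and>
     nba_acc A \<subseteq> nba_trans A"

definition nba_run :: "('q, 'a) nba \<Rightarrow> 'a oword \<Rightarrow> (nat \<Rightarrow> 'q) \<Rightarrow> bool" where
  "nba_run A w r \<longleftrightarrow> r 0 = nba_init A \<and>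
     (\<forall>i. (r i, w i, r (Suc i)) \<in> nba_trans A)"

definition nba_accepting_run :: "('q, 'a) nba \<Rightarrow> 'a oword \<Rightarrow> (nat \<Rightarrow> 'q) \<Rightarrow> bool" where
  "nba_accepting_run A w r \<longleftrightarrow> nba_run A w r \<and>
     (\<exists>\<^sub>\<infinity> i. (r i, w i, r (Suc i)) \<in> nba_acc A)"

definition nba_lang :: "('q, 'a) nba \<Rightarrow> 'a oword set" where
  "nba_lang A = {w \<in> words (nba_alpha A). \<exists>r. nba_accepting_run A w r}"

definition is_ldba :: "('q, 'a) nba \<Rightarrow> 'q set \<Rightarrow> bool" where
  "is_ldba A Qd \<longleftrightarrow> nba_wf A \<and> Qd \<subseteq> nba_states A \<and>
     nba_acc A \<subseteq> Qd \<times> nba_alpha A \<times> Qd \<and>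
     (\<forall>q \<in> Qd. \<forall>a q1 q2. (q, a, q1) \<in> nba_trans A \<and> (q, a, q2) \<in> nba_trans A \<longrightarrow> q1 = q2) \<and>
     (\<forall>q \<in> Qd. \<forall>a q'. (q, a, q') \<in> nba_trans A \<longrightarrow> q' \<in> Qd)"

record ('q, 'a) dpa =
  dpa_states :: "'q set"
  dpa_init :: 'q
  dpa_alpha :: "'a set"
  dpa_trans :: "'q \<Rightarrow> 'a \<Rightarrow> 'q"
  dpa_color :: "'q \<Rightarrow> 'a \<Rightarrow> nat"

definition dpa_wf :: "('q, 'a) dpa \<Rightarrow> bool" where
  "dpa_wf D \<longleftrightarrow> finite (dpa_states D) \<and> finite (dpa_alpha D) \<and>
     dpa_init D \<in> dpa_states D \<and>
     (\<forall>q \<in> dpa_states D. \<forall>a \<in> dpa_alpha D.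
        dpa_trans D q a \<in> dpa_states D \<and> dpa_color D q a \<ge> 1)"

fun dpa_run :: "('q, 'a) dpa \<Rightarrow> 'a oword \<Rightarrow> nat \<Rightarrow> 'q" where
  "dpa_run D w 0 = dpa_init D"
| "dpa_run D w (Suc i) = dpa_trans D (dpa_run D w i) (w i)"

definition dpa_colors_inf :: "('q, 'a) dpa \<Rightarrow> 'a oword \<Rightarrow> nat set" where
  "dpa_colors_inf D w = {c. \<exists>\<^sub>\<infinity> i. dpa_color D (dpa_run D w i) (w i) = c}"

definition dpa_lang :: "('q, 'a) dpa \<Rightarrow> 'a oword set" where
  "dpa_lang D = {w \<in> words (dpa_alpha D).
      dpa_colors_inf D w \<noteq> {} \<and> even (Min (dpa_colors_inf D w))}"

end

theory Submission
  imports Defs "HOL-Library.Omega_Words_Fun" "HOL-Library.Sublist"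
    "HOL-Combinatorics.Multiset_Permutations"
begin

text \<open>
  \<open>L\<^sub>n\<close> is the set of words over \<open>n\<close> letters in which some letter occurs infinitely often
  but only finitely often twice in a row. An LDBA guesses that letter and then checks
  deterministically that its occurrences stay isolated.

  For the lower bound, every permutation \<open>\<pi> = c @ a # t\<close> of the letters yields a finite word
  ending in a loop for the suffix \<open>a # t\<close>: in it \<open>a\<close> is isolated while every letter of \<open>t\<close>
  occurs doubled, and it is raised to a power acting idempotently on the DPA, so the state
  reached by the whole word is a fixpoint of every suffix loop. The lasso through such a loop
  lies in \<open>L\<^sub>n\<close>, so the loop has even minimal colour. If two permutations \<open>c @ a # t\<close> and
  \<open>c @ b # t'\<close> with \<open>a \<noteq> b\<close> reached the same state, the concatenation of their two loops would
  again be an accepting loop there, but in it every letter occurs doubled, so its lasso is not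
  in \<open>L\<^sub>n\<close>. Hence the \<open>n!\<close> permutations reach pairwise different states.
\<close>

lemma conc_fixpoint_eq_iter:
  assumes "v \<noteq> []" and unfold: "w = v \<frown> w"
  shows "w = v\<^sup>\<omega>"
proof
  have len: "length v > 0" using assms(1) by simp
  fix k show "w k = v\<^sup>\<omega> k"
  proof (induction k rule: less_induct)
    case (less k)
    have "w k = (v \<frown> w) k" using unfold by (rule arg_cong)
    show ?case
    proof (cases "k < length v")
      case True
      then show ?thesis using \<open>w k = (v \<frown> w) k\<close> assms(1) by simp
    next
      case False
      then have "w k = w (k - length v)" using \<open>w k = (v \<frown> w) k\<close> by simp
      also have "\<dots> = v\<^sup>\<omega> (k - length v)" using False len by (intro less) arith
      also have "\<dots> = v\<^sup>\<omega> k" using False len by (simp add: le_mod_geq)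
      finally show ?thesis .
    qed
  qed
qed

lemma iter_concat_replicate:
  assumes "v \<noteq> []" "m \<noteq> 0"
  shows "(concat (replicate m v))\<^sup>\<omega> = v\<^sup>\<omega>"
proof -
  have unroll: "v\<^sup>\<omega> = concat (replicate k v) \<frown> v\<^sup>\<omega>" for k
  proof (induction k)
    case (Suc k)
    have "v\<^sup>\<omega> = v \<frown> v\<^sup>\<omega>" using assms(1) by (intro iter_unroll) simp
    also have "\<dots> = v \<frown> concat (replicate k v) \<frown> v\<^sup>\<omega>" by (rule arg_cong[OF Suc])
    also have "\<dots> = concat (replicate (Suc k) v) \<frown> v\<^sup>\<omega>" by (simp only: conc_conc replicate_Suc concat.simps)
    finally show ?case .
  qed simp
  have "concat (replicate m v) \<noteq> []" using assms by simp
  then show ?thesis by (rule conc_fixpoint_eq_iter[symmetric, OF _ unroll])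
qed

lemma lasso_in_words:
  assumes "set x \<subseteq> A" "set u \<subseteq> A" "u \<noteq> []"
  shows "x \<frown> u\<^sup>\<omega> \<in> words A"
  unfolding words_def
proof (intro CollectI allI)
  fix i show "(x \<frown> u\<^sup>\<omega>) i \<in> A"
    using assms by (cases "i < length x") auto
qed

lemma lasso_nth_period:
  assumes "p < length u"
  shows "(x \<frown> u\<^sup>\<omega>) (length x + m * length u + p) = u ! p"
proof -
  have "0 < length u" using assms by linarith
  then show ?thesis using assms by simp
qed

lemma frequent_pair_lasso:
  assumes "sublist [i, i] u"
  shows "\<exists>\<^sub>\<infinity>k. (x \<frown> u\<^sup>\<omega>) k = i \<and> (x \<frown> u\<^sup>\<omega>) (Suc k) = i"
proof -
  obtain ps ss where u: "u = ps @ [i, i] @ ss" using assms by (auto simp: sublist_def)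
  then have len: "length u \<ge> 1" by simp
  have "\<exists>k\<ge>m. (x \<frown> u\<^sup>\<omega>) k = i \<and> (x \<frown> u\<^sup>\<omega>) (Suc k) = i" for m
  proof (intro exI conjI)
    let ?k = "length x + m * length u + length ps"
    have "m \<le> m * length u" using mult_le_mono2[OF len, of m] by (simp only: mult_1_right)
    then show "m \<le> ?k" by linarith
    have "length ps < length u" "Suc (length ps) < length u" by (simp_all add: u)
    from lasso_nth_period[OF this(1)] lasso_nth_period[OF this(2)]
    show "(x \<frown> u\<^sup>\<omega>) ?k = i" "(x \<frown> u\<^sup>\<omega>) (Suc ?k) = i"
      by (simp_all add: u nth_append)
  qed
  then show ?thesis by (simp add: INFM_nat_le)
qed

lemma isolated_letter_lasso:
  assumes "a \<notin> set v" "v \<noteq> []"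
  shows "\<not> (\<exists>\<^sub>\<infinity>k. (x \<frown> (a # v)\<^sup>\<omega>) k = a \<and> (x \<frown> (a # v)\<^sup>\<omega>) (Suc k) = a)"
proof -
  let ?u = "a # v"
  have only_head: "p = 0" if "p < length ?u" "?u ! p = a" for p
    using that assms(1) by (cases p) auto
  have "\<not> ((x \<frown> ?u\<^sup>\<omega>) k = a \<and> (x \<frown> ?u\<^sup>\<omega>) (Suc k) = a)" if "length x \<le> k" for k
  proof
    assume pair: "(x \<frown> ?u\<^sup>\<omega>) k = a \<and> (x \<frown> ?u\<^sup>\<omega>) (Suc k) = a"
    define j where "j = k - length x"
    have "?u ! (j mod length ?u) = a" "?u ! (Suc j mod length ?u) = a"
      using pair that by (simp_all add: j_def Suc_diff_le)
    then have "j mod length ?u = 0" "Suc j mod length ?u = 0"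
      using only_head by simp_all
    moreover have "length ?u \<ge> 2" using assms(2) by (cases v) auto
    ultimately show False using assms(2) by (simp add: mod_Suc)
  qed
  then have "\<forall>\<^sub>\<infinity>k. \<not> ((x \<frown> ?u\<^sup>\<omega>) k = a \<and> (x \<frown> ?u\<^sup>\<omega>) (Suc k) = a)"
    unfolding MOST_nat_le by blast
  then show ?thesis by (simp only: not_INFM)
qed

definition isolated_letter_lang :: "nat \<Rightarrow> nat oword set" where
  "isolated_letter_lang n = {w \<in> words {0..<n}.
     \<exists>i. (\<exists>\<^sub>\<infinity>k. w k = i) \<and> \<not> (\<exists>\<^sub>\<infinity>k. w k = i \<and> w (Suc k) = i)}"

lemma lasso_in_isolated_letter_lang:
  assumes "a \<notin> set v" "v \<noteq> []" "x \<frown> (a # v)\<^sup>\<omega> \<in> words {0..<n}"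
  shows "x \<frown> (a # v)\<^sup>\<omega> \<in> isolated_letter_lang n"
  unfolding isolated_letter_lang_def
proof (intro CollectI conjI exI)
  have "a \<in> limit (x \<frown> (a # v)\<^sup>\<omega>)" by simp
  then show "\<exists>\<^sub>\<infinity>k. (x \<frown> (a # v)\<^sup>\<omega>) k = a" by (simp only: limit_iff_frequent)
  show "\<not> (\<exists>\<^sub>\<infinity>k. (x \<frown> (a # v)\<^sup>\<omega>) k = a \<and> (x \<frown> (a # v)\<^sup>\<omega>) (Suc k) = a)"
    using assms(1,2) by (rule isolated_letter_lasso)
qed (rule assms(3))

lemma lasso_notin_isolated_letter_lang:
  assumes "u \<noteq> []" "\<And>i. i \<in> set u \<Longrightarrow> sublist [i, i] u"
  shows "x \<frown> u\<^sup>\<omega> \<notin> isolated_letter_lang n"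
proof
  assume "x \<frown> u\<^sup>\<omega> \<in> isolated_letter_lang n"
  then obtain i where "\<exists>\<^sub>\<infinity>k. (x \<frown> u\<^sup>\<omega>) k = i"
    and no_pair: "\<not> (\<exists>\<^sub>\<infinity>k. (x \<frown> u\<^sup>\<omega>) k = i \<and> (x \<frown> u\<^sup>\<omega>) (Suc k) = i)"
    unfolding isolated_letter_lang_def by blast
  then have "i \<in> limit (x \<frown> u\<^sup>\<omega>)" by (simp only: limit_iff_frequent)
  then have "i \<in> set u" using assms(1) by simp
  then show False using no_pair frequent_pair_lasso[OF assms(2)] by blast
qed

primrec dpa_colors :: "('q, 'a) dpa \<Rightarrow> 'q \<Rightarrow> 'a list \<Rightarrow> nat list" where
  "dpa_colors D q [] = []"
| "dpa_colors D q (a # u) = dpa_color D q a # dpa_colors D (dpa_trans D q a) u"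

lemma dpa_colors_eq_Nil_iff [simp]: "dpa_colors D q u = [] \<longleftrightarrow> u = []"
  by (cases u) simp_all

lemma dpa_colors_update_init [simp]: "dpa_colors (D\<lparr>dpa_init := p\<rparr>) q u = dpa_colors D q u"
  by (induction u arbitrary: q) simp_all

lemma dpa_colors_append:
  "dpa_colors D q (u @ v) = dpa_colors D q u @ dpa_colors D (foldl (dpa_trans D) q u) v"
  by (induction u arbitrary: q) simp_all

definition dpa_color_word :: "('q, 'a) dpa \<Rightarrow> 'a oword \<Rightarrow> nat oword" where
  "dpa_color_word D w i = dpa_color D (dpa_run D w i) (w i)"

lemma dpa_colors_inf_eq_limit: "dpa_colors_inf D w = limit (dpa_color_word D w)"
  unfolding dpa_colors_inf_def limit_def dpa_color_word_def ..

lemma dpa_run_build_Suc: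
  "dpa_run D (a ## w) (Suc i) = dpa_run (D\<lparr>dpa_init := dpa_trans D (dpa_init D) a\<rparr>) w i"
  by (induction i) simp_all

lemma dpa_color_word_build:
  "dpa_color_word D (a ## w) =
     dpa_color D (dpa_init D) a ## dpa_color_word (D\<lparr>dpa_init := dpa_trans D (dpa_init D) a\<rparr>) w"
proof
  fix i show "dpa_color_word D (a ## w) i = (dpa_color D (dpa_init D) a ##
      dpa_color_word (D\<lparr>dpa_init := dpa_trans D (dpa_init D) a\<rparr>) w) i"
    by (cases i) (simp_all add: dpa_color_word_def dpa_run_build_Suc del: dpa_run.simps(2))
qed

lemma dpa_color_word_conc:
  "dpa_color_word D (u \<frown> w) =
     dpa_colors D (dpa_init D) u \<frown> dpa_color_word (D\<lparr>dpa_init := foldl (dpa_trans D) (dpa_init D) u\<rparr>) w"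
proof (induction u arbitrary: D)
  case (Cons a u)
  then show ?case by (simp add: dpa_color_word_build)
qed simp

lemma dpa_color_word_iter:
  assumes "foldl (dpa_trans D) (dpa_init D) u = dpa_init D" "u \<noteq> []"
  shows "dpa_color_word D u\<^sup>\<omega> = (dpa_colors D (dpa_init D) u)\<^sup>\<omega>"
proof (rule conc_fixpoint_eq_iter)
  show "dpa_colors D (dpa_init D) u \<noteq> []" using assms(2) by simp
  have "u\<^sup>\<omega> = u \<frown> u\<^sup>\<omega>" using assms(2) by (intro iter_unroll) simp
  then have "dpa_color_word D u\<^sup>\<omega> = dpa_color_word D (u \<frown> u\<^sup>\<omega>)" by (rule arg_cong)
  also have "\<dots> = dpa_colors D (dpa_init D) u \<frown> dpa_color_word D u\<^sup>\<omega>"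
    unfolding dpa_color_word_conc assms(1) by simp
  finally show "dpa_color_word D u\<^sup>\<omega> = dpa_colors D (dpa_init D) u \<frown> dpa_color_word D u\<^sup>\<omega>" .
qed

lemma dpa_colors_inf_lasso:
  assumes "foldl (dpa_trans D) (dpa_init D) x = p" "foldl (dpa_trans D) p u = p" "u \<noteq> []"
  shows "dpa_colors_inf D (x \<frown> u\<^sup>\<omega>) = set (dpa_colors D p u)"
proof -
  let ?Dp = "D\<lparr>dpa_init := p\<rparr>"
  have "dpa_color_word ?Dp u\<^sup>\<omega> = (dpa_colors D p u)\<^sup>\<omega>"
    using dpa_color_word_iter[of ?Dp u] assms(2,3) by simp
  moreover have "dpa_colors D p u \<noteq> []" using assms(3) by simp
  ultimately show ?thesis
    by (simp add: dpa_colors_inf_eq_limit dpa_color_word_conc assms(1))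
qed

definition dpa_accepting_loop :: "('q, 'a) dpa \<Rightarrow> 'q \<Rightarrow> 'a list \<Rightarrow> bool" where
  "dpa_accepting_loop D p u \<longleftrightarrow> even (Min (set (dpa_colors D p u)))"

lemma dpa_lang_lasso_iff:
  assumes "foldl (dpa_trans D) (dpa_init D) x = p" "foldl (dpa_trans D) p u = p" "u \<noteq> []"
    and "x \<frown> u\<^sup>\<omega> \<in> words (dpa_alpha D)"
  shows "x \<frown> u\<^sup>\<omega> \<in> dpa_lang D \<longleftrightarrow> dpa_accepting_loop D p u"
  using assms dpa_colors_inf_lasso[OF assms(1-3)]
  by (simp add: dpa_lang_def dpa_accepting_loop_def)

lemma dpa_accepting_loop_append:
  assumes "foldl (dpa_trans D) p u = p" "u \<noteq> []" "v \<noteq> []"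
    and "dpa_accepting_loop D p u" "dpa_accepting_loop D p v"
  shows "dpa_accepting_loop D p (u @ v)"
proof -
  have "set (dpa_colors D p (u @ v)) = set (dpa_colors D p u) \<union> set (dpa_colors D p v)"
    using assms(1) by (simp add: dpa_colors_append)
  moreover have "dpa_colors D p u \<noteq> []" "dpa_colors D p v \<noteq> []"
    using assms(2,3) by simp_all
  ultimately have "Min (set (dpa_colors D p (u @ v))) =
      min (Min (set (dpa_colors D p u))) (Min (set (dpa_colors D p v)))"
    by (simp add: Min_Un)
  then show ?thesis using assms(4,5) by (simp add: dpa_accepting_loop_def min_def)
qed

lemma funpow_periodic_from:
  fixes t :: "'a \<Rightarrow> 'a"
  assumes period: "(t ^^ (a + d)) q = (t ^^ a) q" and "a \<le> k"
  shows "(t ^^ (k + m * d)) q = (t ^^ k) q"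
proof (induction m)
  case (Suc m)
  have "k + Suc m * d = (k - a + m * d) + (a + d)" "k + m * d = (k - a + m * d) + a"
    using \<open>a \<le> k\<close> by simp_all
  then have "(t ^^ (k + Suc m * d)) q = (t ^^ (k - a + m * d)) ((t ^^ (a + d)) q)"
    and "(t ^^ (k + m * d)) q = (t ^^ (k - a + m * d)) ((t ^^ a) q)"
    by (simp_all only: funpow_add comp_apply)
  then have "(t ^^ (k + Suc m * d)) q = (t ^^ (k + m * d)) q" by (simp only: period)
  then show ?case using Suc by simp
qed simp

lemma funpow_idempotent_power:
  assumes "finite S" "t ` S \<subseteq> S"
  shows "\<exists>k. \<forall>q\<in>S. (t ^^ Suc k) ((t ^^ Suc k) q) = (t ^^ Suc k) q"
proof -
  have "(t ^^ i) q \<in> S" if "q \<in> S" for i q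
    using that assms(2) by (induction i) auto
  then have "range (\<lambda>i. restrict (t ^^ i) S) \<subseteq> S \<rightarrow>\<^sub>E S"
    by (auto simp: restrict_PiE_iff)
  then have "finite (range (\<lambda>i. restrict (t ^^ i) S))"
    using finite_PiE[OF assms(1,1)] by (rule finite_subset)
  then have "\<not> inj (\<lambda>i. restrict (t ^^ i) S)"
    using finite_imageD infinite_UNIV_nat by blast
  then obtain a b where "a < b" "restrict (t ^^ a) S = restrict (t ^^ b) S"
    unfolding inj_def by (metis nat_neq_iff)
  then obtain d where "d > 0" and period: "\<forall>q\<in>S. (t ^^ (a + d)) q = (t ^^ a) q"
    by (metis less_imp_add_positive restrict_apply')
  define M where "M = (a + 1) * d"
  have "(a + 1) * 1 \<le> M" unfolding M_def using \<open>d > 0\<close> by (intro mult_le_mono2) simp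
  then have "a \<le> M" by simp
  have "(t ^^ M) ((t ^^ M) q) = (t ^^ M) q" if "q \<in> S" for q
  proof -
    have "(t ^^ M) ((t ^^ M) q) = (t ^^ (M + (a + 1) * d)) q" by (simp add: M_def funpow_add)
    also have "\<dots> = (t ^^ M) q" using period that \<open>a \<le> M\<close> by (intro funpow_periodic_from) auto
    finally show ?thesis .
  qed
  moreover have "M = Suc (M - 1)" using \<open>d > 0\<close> by (simp add: M_def)
  ultimately show ?thesis by metis
qed

lemma dpa_steps_in_states:
  assumes "dpa_wf D" "q \<in> dpa_states D" "set u \<subseteq> dpa_alpha D"
  shows "foldl (dpa_trans D) q u \<in> dpa_states D"
  using assms(2,3) by (induction u arbitrary: q) (use assms(1) in \<open>auto simp: dpa_wf_def\<close>)

lemma foldl_concat_replicate: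
  "foldl f q (concat (replicate m u)) = ((\<lambda>q. foldl f q u) ^^ m) q"
  by (induction m arbitrary: q) (simp_all add: funpow_Suc_right del: funpow.simps)

definition dpa_idempotent :: "('q, 'a) dpa \<Rightarrow> 'a list \<Rightarrow> bool" where
  "dpa_idempotent D v \<longleftrightarrow>
     (\<forall>q\<in>dpa_states D. foldl (dpa_trans D) (foldl (dpa_trans D) q v) v = foldl (dpa_trans D) q v)"

text \<open>
  The \<open>Suc\<close> keeps the exponent positive even where \<open>SOME\<close> finds no witness, so only
  idempotence depends on \<open>dpa_wf D\<close>.
\<close>

definition idem_power :: "('q, 'a) dpa \<Rightarrow> 'a list \<Rightarrow> 'a list" where
  "idem_power D u = concat (replicate (Suc (SOME k. dpa_idempotent D (concat (replicate (Suc k) u)))) u)"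

lemma idem_power_idempotent:
  assumes "dpa_wf D" "set u \<subseteq> dpa_alpha D"
  shows "dpa_idempotent D (idem_power D u)"
proof -
  have "finite (dpa_states D)" using assms(1) by (simp add: dpa_wf_def)
  moreover have "(\<lambda>q. foldl (dpa_trans D) q u) ` dpa_states D \<subseteq> dpa_states D"
    using dpa_steps_in_states[OF assms(1) _ assms(2)] by blast
  ultimately have "\<exists>k. dpa_idempotent D (concat (replicate (Suc k) u))"
    unfolding dpa_idempotent_def foldl_concat_replicate by (rule funpow_idempotent_power)
  then show ?thesis unfolding idem_power_def by (rule someI_ex)
qed

lemma idem_power_eq_snoc: "\<exists>y. idem_power D u = y @ u"
proof -
  have "concat (replicate (Suc k) u) = concat (replicate k u) @ u" for k
    by (simp flip: replicate_append_same)
  then show ?thesis unfolding idem_power_def by blast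
qed

lemma set_idem_power [simp]: "set (idem_power D u) = set u"
  unfolding idem_power_def by (simp del: replicate_Suc)

lemma sublist_idem_power: "sublist u (idem_power D u)"
  using idem_power_eq_snoc by (metis sublist_append_leftI)

lemma iter_idem_power: "u \<noteq> [] \<Longrightarrow> (idem_power D u)\<^sup>\<omega> = u\<^sup>\<omega>"
  unfolding idem_power_def by (rule iter_concat_replicate) simp_all

definition doubled :: "'a list \<Rightarrow> 'a list" where
  "doubled xs = concat (map (\<lambda>c. [c, c]) xs)"

lemma set_doubled [simp]: "set (doubled xs) = set xs"
  by (auto simp: doubled_def)

lemma doubled_eq_Nil_iff [simp]: "doubled xs = [] \<longleftrightarrow> xs = []"
  by (simp add: doubled_def)

lemma sublist_doubled:
  assumes "c \<in> set xs"
  shows "sublist [c, c] (doubled xs)"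
proof -
  obtain ys zs where "xs = ys @ c # zs" using assms by (auto simp: in_set_conv_decomp)
  then have "doubled xs = doubled ys @ [c, c] @ doubled zs" by (simp add: doubled_def)
  then show ?thesis by (metis sublist_appendI)
qed

fun perm_word :: "('q, 'a) dpa \<Rightarrow> 'a list \<Rightarrow> 'a list" where
  "perm_word D (a # b # r) = idem_power D (a # doubled (b # r) @ perm_word D (b # r))"
| "perm_word D _ = []"

declare perm_word.simps(1) [simp del]

lemma set_perm_word: "set (perm_word D xs) \<subseteq> set xs"
  by (induction D xs rule: perm_word.induct) (auto simp: perm_word.simps(1))

lemma set_perm_word_Cons_Cons [simp]: "set (perm_word D (a # b # r)) = set (a # b # r)"
  using set_perm_word[of D "b # r"] by (auto simp: perm_word.simps(1))

lemma perm_word_Cons_Cons_neq_Nil [simp]: "perm_word D (a # b # r) \<noteq> []"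
  by (simp flip: set_empty)

lemma iter_perm_word:
  "(perm_word D (a # b # r))\<^sup>\<omega> = (a # doubled (b # r) @ perm_word D (b # r))\<^sup>\<omega>"
  by (simp add: perm_word.simps(1) iter_idem_power)

lemma sublist_perm_word:
  assumes "c \<in> set (b # r)"
  shows "sublist [c, c] (perm_word D (a # b # r))"
proof -
  have "sublist [c, c] (a # doubled (b # r) @ perm_word D (b # r))"
    using sublist_doubled[OF assms] by (metis append_Cons sublist_append_rightI sublist_Cons_right
        sublist_order.order_trans)
  then show ?thesis
    unfolding perm_word.simps(1) using sublist_idem_power sublist_order.order_trans by fastforce
qed

lemma perm_word_append_suffix: "\<exists>y. perm_word D (ys @ xs) = y @ perm_word D xs"
proof (induction ys)
  case (Cons a ys)
  have "\<exists>y. perm_word D (a # zs) = y @ perm_word D zs" for zs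
  proof (cases zs)
    case (Cons b r)
    obtain y where "idem_power D (a # doubled zs @ perm_word D zs) = y @ a # doubled zs @ perm_word D zs"
      using idem_power_eq_snoc by (metis append_Cons)
    then show ?thesis using Cons by (intro exI[of _ "y @ a # doubled zs"]) (simp add: perm_word.simps(1))
  qed simp
  then show ?case using Cons.IH by (metis append.assoc append_Cons)
qed simp

lemma perm_word_idempotent:
  assumes "dpa_wf D" "set (a # b # r) \<subseteq> dpa_alpha D"
  shows "dpa_idempotent D (perm_word D (a # b # r))"
  using set_perm_word[of D "b # r"] assms
  by (simp only: perm_word.simps) (rule idem_power_idempotent; auto)

definition perm_state :: "('q, 'a) dpa \<Rightarrow> 'a list \<Rightarrow> 'q" where
  "perm_state D xs = foldl (dpa_trans D) (dpa_init D) (perm_word D xs)"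

context
  fixes D :: "('q, nat) dpa" and n :: nat
  assumes wf: "dpa_wf D" and alpha: "dpa_alpha D = {0..<n}"
    and lang: "dpa_lang D = isolated_letter_lang n"
begin

lemma perm_state_in_states:
  assumes "set xs \<subseteq> {0..<n}"
  shows "perm_state D xs \<in> dpa_states D"
  unfolding perm_state_def using wf assms alpha set_perm_word[of D xs]
  by (intro dpa_steps_in_states) (auto simp: dpa_wf_def)

lemma perm_state_loop:
  assumes "set (ys @ a # b # r) \<subseteq> {0..<n}"
  shows "foldl (dpa_trans D) (perm_state D (ys @ a # b # r)) (perm_word D (a # b # r))
      = perm_state D (ys @ a # b # r)"
proof -
  obtain y where y: "perm_word D (ys @ a # b # r) = y @ perm_word D (a # b # r)"
    using perm_word_append_suffix by blast
  have "set y \<subseteq> dpa_alpha D"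
    using set_perm_word[of D "ys @ a # b # r"] assms alpha unfolding y by auto
  then have "foldl (dpa_trans D) (dpa_init D) y \<in> dpa_states D"
    using wf by (intro dpa_steps_in_states) (auto simp: dpa_wf_def)
  moreover have "dpa_idempotent D (perm_word D (a # b # r))"
    using assms alpha by (intro perm_word_idempotent[OF wf]) auto
  ultimately show ?thesis unfolding perm_state_def y dpa_idempotent_def by simp
qed

lemma perm_word_accepting_loop:
  assumes "set (ys @ a # b # r) \<subseteq> {0..<n}" "distinct (a # b # r)"
  shows "dpa_accepting_loop D (perm_state D (ys @ a # b # r)) (perm_word D (a # b # r))"
proof -
  let ?x = "perm_word D (ys @ a # b # r)" and ?u = "perm_word D (a # b # r)"
  let ?v = "doubled (b # r) @ perm_word D (b # r)"
  have words: "?x \<frown> ?u\<^sup>\<omega> \<in> words {0..<n}"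
    using assms(1) set_perm_word[of D "ys @ a # b # r"] by (intro lasso_in_words) auto
  have unroll: "?x \<frown> ?u\<^sup>\<omega> = ?x \<frown> (a # ?v)\<^sup>\<omega>" by (simp only: iter_perm_word append_Cons)
  have "?x \<frown> ?u\<^sup>\<omega> \<in> isolated_letter_lang n"
    unfolding unroll using assms(2) set_perm_word[of D "b # r"] words[unfolded unroll]
    by (intro lasso_in_isolated_letter_lang) auto
  then have "?x \<frown> ?u\<^sup>\<omega> \<in> dpa_lang D" using lang by simp
  then show ?thesis
    using dpa_lang_lasso_iff[OF perm_state_def[symmetric] perm_state_loop[OF assms(1)]] words alpha
    by simp
qed

lemma perm_state_neq:
  assumes perm_a: "set (c @ a # t) = {0..<n}" "distinct (c @ a # t)"
    and perm_b: "set (c @ b # t') = {0..<n}" "distinct (c @ b # t')" and "a \<noteq> b"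
  shows "perm_state D (c @ a # t) \<noteq> perm_state D (c @ b # t')"
proof
  assume same_state: "perm_state D (c @ a # t) = perm_state D (c @ b # t')"
  have same_set: "set (a # t) = set (b # t')" using perm_a perm_b by auto
  then have "b \<in> set t" "a \<in> set t'" using \<open>a \<noteq> b\<close> by auto
  then obtain b0 r b1 r' where t: "t = b0 # r" and t': "t' = b1 # r'" by (metis list.set_cases)
  have sub_a: "set (c @ a # b0 # r) \<subseteq> {0..<n}" using perm_a(1) unfolding t by (rule equalityD1)
  have sub_b: "set (c @ b # b1 # r') \<subseteq> {0..<n}" using perm_b(1) unfolding t' by (rule equalityD1)
  have "distinct (a # b0 # r)" "distinct (b # b1 # r')" using perm_a(2) perm_b(2) unfolding t t' by simp_all
  define p where "p = perm_state D (c @ a # t)"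
  define u where "u = perm_word D (a # t)"
  define v where "v = perm_word D (b # t')"
  have loop_u: "foldl (dpa_trans D) p u = p" and acc_u: "dpa_accepting_loop D p u"
    using perm_state_loop[OF sub_a] perm_word_accepting_loop[OF sub_a \<open>distinct (a # b0 # r)\<close>]
    unfolding u_def p_def t by simp_all
  have loop_v: "foldl (dpa_trans D) p v = p" and acc_v: "dpa_accepting_loop D p v"
    using perm_state_loop[OF sub_b] perm_word_accepting_loop[OF sub_b \<open>distinct (b # b1 # r')\<close>]
    unfolding v_def p_def same_state t' by simp_all
  have "u \<noteq> []" "v \<noteq> []" unfolding u_def v_def t t' by simp_all
  have reach: "foldl (dpa_trans D) (dpa_init D) (perm_word D (c @ a # t)) = p"
    unfolding p_def perm_state_def ..
  have loop_uv: "foldl (dpa_trans D) p (u @ v) = p" using loop_u loop_v by simp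
  have set_uv: "set (u @ v) = set (a # b0 # r)" using same_set unfolding u_def v_def t t' by simp
  then have words: "perm_word D (c @ a # t) \<frown> (u @ v)\<^sup>\<omega> \<in> words (dpa_alpha D)"
    using set_perm_word[of D "c @ a # t"] perm_a(1) \<open>u \<noteq> []\<close> unfolding alpha t
    by (intro lasso_in_words) auto
  have "dpa_accepting_loop D p (u @ v)"
    using loop_u \<open>u \<noteq> []\<close> \<open>v \<noteq> []\<close> acc_u acc_v by (rule dpa_accepting_loop_append)
  then have "perm_word D (c @ a # t) \<frown> (u @ v)\<^sup>\<omega> \<in> isolated_letter_lang n"
    using dpa_lang_lasso_iff[OF reach loop_uv _ words] \<open>u \<noteq> []\<close> lang by simp
  moreover have "sublist [i, i] (u @ v)" if "i \<in> set (u @ v)" for i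
  proof (cases "i = a")
    case True
    then have "sublist [i, i] v" using \<open>a \<in> set t'\<close> sublist_perm_word unfolding v_def t' by metis
    then show ?thesis by (meson sublist_append_leftI sublist_order.order_trans)
  next
    case False
    then have "i \<in> set (b0 # r)" using that unfolding set_uv by simp
    then have "sublist [i, i] u" using sublist_perm_word unfolding u_def t by metis
    then show ?thesis by (meson sublist_append_rightI sublist_order.order_trans)
  qed
  then have "perm_word D (c @ a # t) \<frown> (u @ v)\<^sup>\<omega> \<notin> isolated_letter_lang n"
    using \<open>u \<noteq> []\<close> by (intro lasso_notin_isolated_letter_lang) simp_all
  ultimately show False by contradiction
qed

lemma perm_state_inj_on: "inj_on (perm_state D) (permutations_of_set {0..<n})"
proof (rule inj_onI, rule ccontr)
  fix \<pi> \<sigma> assume "\<pi> \<in> permutations_of_set {0..<n}" "\<sigma> \<in> permutations_of_set {0..<n}"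
    and same_state: "perm_state D \<pi> = perm_state D \<sigma>" and "\<pi> \<noteq> \<sigma>"
  then have perm_\<pi>: "set \<pi> = {0..<n}" "distinct \<pi>" and perm_\<sigma>: "set \<sigma> = {0..<n}" "distinct \<sigma>"
    by (auto dest: permutations_of_setD)
  then have "length \<pi> = length \<sigma>" by (metis distinct_card)
  with \<open>\<pi> \<noteq> \<sigma>\<close> have "\<pi> \<parallel> \<sigma>" by (auto simp: parallel_def prefix_def)
  then obtain c a t b t' where "\<pi> = c @ a # t" "\<sigma> = c @ b # t'" "a \<noteq> b"
    using parallel_decomp by blast
  then show False using perm_state_neq perm_\<pi> perm_\<sigma> same_state by blast
qed

lemma fact_le_card_dpa_states: "fact n \<le> card (dpa_states D)"
proof -
  have "fact n = card (perm_state D ` permutations_of_set {0..<n})"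
    using perm_state_inj_on by (simp add: card_image)
  also have "\<dots> \<le> card (dpa_states D)"
    using wf perm_state_in_states by (intro card_mono) (auto simp: dpa_wf_def dest: permutations_of_setD)
  finally show ?thesis .
qed

end

text \<open>
  State \<open>0\<close> reads arbitrary letters until it guesses a letter \<open>i\<close>; then \<open>Suc i\<close> waits for \<open>i\<close>
  (accepting when it comes) and \<open>Suc (n + i)\<close> has just read \<open>i\<close>, so it has no \<open>i\<close>-transition.
  The states \<open>2 * n + 1, \<dots>, 3 * n + 1\<close> are unreachable.
\<close>

definition ldba_trans :: "nat \<Rightarrow> (nat \<times> nat \<times> nat) set" where
  "ldba_trans n =
     {(0, c, 0) | c. c < n} \<union> {(0, c, Suc i) | c i. c < n \<and> i < n}
     \<union> {(Suc i, c, Suc i) | c i. c < n \<and> i < n \<and> c \<noteq> i}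
     \<union> {(Suc i, i, Suc (n + i)) | i. i < n}
     \<union> {(Suc (n + i), c, Suc i) | c i. c < n \<and> i < n \<and> c \<noteq> i}"

definition ldba_acc :: "nat \<Rightarrow> (nat \<times> nat \<times> nat) set" where
  "ldba_acc n = {(Suc i, i, Suc (n + i)) | i. i < n}"

definition ldba :: "nat \<Rightarrow> (nat, nat) nba" where
  "ldba n = \<lparr>nba_states = {0..<3 * n + 2}, nba_init = 0, nba_alpha = {0..<n},
     nba_trans = ldba_trans n, nba_acc = ldba_acc n\<rparr>"

lemma is_ldba_ldba: "is_ldba (ldba n) {1..2 * n}"
  by (auto simp: is_ldba_def nba_wf_def ldba_def ldba_trans_def ldba_acc_def)

lemma card_ldba_states: "card (nba_states (ldba n)) = 3 * n + 2"
  by (simp add: ldba_def)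

lemma ldba_trans_waiting:
  "(Suc i, c, q) \<in> ldba_trans n \<Longrightarrow> i < n \<Longrightarrow> q = (if c = i then Suc (n + i) else Suc i)"
  by (auto simp: ldba_trans_def)

lemma ldba_trans_seen:
  "(Suc (n + i), c, q) \<in> ldba_trans n \<Longrightarrow> i < n \<Longrightarrow> c \<noteq> i \<and> q = Suc i"
  by (auto simp: ldba_trans_def)

context
  fixes n i :: nat and w :: "nat oword" and r :: "nat \<Rightarrow> nat" and k0 :: nat
  assumes trans: "\<And>k. (r k, w k, r (Suc k)) \<in> ldba_trans n"
    and "i < n" and start: "r k0 = Suc i"
begin

lemma ldba_run_trapped: "k0 \<le> k \<Longrightarrow> r k = Suc i \<or> r k = Suc (n + i)"
proof (induction k rule: dec_induct)
  case (step k)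
  then show ?case using trans[of k] ldba_trans_waiting ldba_trans_seen \<open>i < n\<close> by metis
qed (simp add: start)

lemma ldba_run_no_pair:
  assumes "k0 \<le> k"
  shows "\<not> (w k = i \<and> w (Suc k) = i)"
proof
  assume pair: "w k = i \<and> w (Suc k) = i"
  then have "r (Suc k) = Suc (n + i)"
    using ldba_run_trapped[OF assms] trans[of k] ldba_trans_waiting ldba_trans_seen \<open>i < n\<close> by metis
  then show False using pair trans[of "Suc k"] ldba_trans_seen \<open>i < n\<close> by metis
qed

lemma ldba_run_acc_letter:
  assumes "k0 \<le> k" "(r k, w k, r (Suc k)) \<in> ldba_acc n"
  shows "w k = i"
  using assms(2) ldba_run_trapped[OF assms(1)] by (auto simp: ldba_acc_def)

end

lemma ldba_lang_subset: "nba_lang (ldba n) \<subseteq> isolated_letter_lang n"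
proof
  fix w assume "w \<in> nba_lang (ldba n)"
  then obtain r where w: "w \<in> words {0..<n}" and trans: "\<And>k. (r k, w k, r (Suc k)) \<in> ldba_trans n"
    and acc: "\<exists>\<^sub>\<infinity>k. (r k, w k, r (Suc k)) \<in> ldba_acc n"
    by (auto simp: nba_lang_def nba_accepting_run_def nba_run_def ldba_def)
  obtain k0 where "(r k0, w k0, r (Suc k0)) \<in> ldba_acc n" using acc by (auto dest: INFM_EX)
  then obtain i where "i < n" "r k0 = Suc i" by (auto simp: ldba_acc_def)
  note run = trans this
  have "\<exists>\<^sub>\<infinity>k. (r k, w k, r (Suc k)) \<in> ldba_acc n \<and> k0 \<le> k"
    using acc MOST_ge_nat by (rule INFM_conjI)
  then have "\<exists>\<^sub>\<infinity>k. w k = i"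
    by (rule INFM_mono) (use ldba_run_acc_letter[OF run] in blast)
  moreover have "\<forall>\<^sub>\<infinity>k. \<not> (w k = i \<and> w (Suc k) = i)"
    using ldba_run_no_pair[OF run] by (auto simp: MOST_nat_le)
  ultimately show "w \<in> isolated_letter_lang n"
    using w unfolding isolated_letter_lang_def not_INFM[symmetric] by blast
qed

lemma ldba_lang_supset: "isolated_letter_lang n \<subseteq> nba_lang (ldba n)"
proof
  fix w assume "w \<in> isolated_letter_lang n"
  then obtain i where w: "w \<in> words {0..<n}" and inf: "\<exists>\<^sub>\<infinity>k. w k = i"
    and fin: "\<not> (\<exists>\<^sub>\<infinity>k. w k = i \<and> w (Suc k) = i)"
    unfolding isolated_letter_lang_def by blast
  obtain k0 where no_pair: "\<And>k. k0 \<le> k \<Longrightarrow> \<not> (w k = i \<and> w (Suc k) = i)"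
    using fin unfolding not_INFM MOST_nat_le by blast
  have letters: "w k < n" for k using w by (auto simp: words_def)
  obtain k1 where "w k1 = i" using INFM_EX[OF inf] by blast
  then have "i < n" using letters by blast
  define r where "r k = (if k \<le> k0 then 0 else if Suc k0 < k \<and> w (k - 1) = i then Suc (n + i) else Suc i)"
    for k
  have r_Suc: "r (Suc k) = (if w k = i then Suc (n + i) else Suc i)" if "k0 < k" for k
    using that by (simp add: r_def)
  have after_i: "w k \<noteq> i" if "Suc k0 < k" "w (k - 1) = i" for k
  proof -
    have "k = Suc (k - 1)" "k0 \<le> k - 1" using that(1) by simp_all
    then show ?thesis using no_pair that(2) by metis
  qed
  have trans: "(r k, w k, r (Suc k)) \<in> ldba_trans n" for k
  proof (cases "k0 < k")
    case True
    show ?thesis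
    proof (cases "r k = Suc i")
      case False
      then have "Suc k0 < k" "w (k - 1) = i" "r k = Suc (n + i)"
        using True by (auto simp: r_def split: if_splits)
      then show ?thesis using r_Suc[OF True] after_i letters \<open>i < n\<close>
        by (auto simp: ldba_trans_def)
    qed (use r_Suc[OF True] letters \<open>i < n\<close> in \<open>auto simp: ldba_trans_def\<close>)
  qed (use letters \<open>i < n\<close> in \<open>auto simp: r_def ldba_trans_def\<close>)
  have acc: "(r k, w k, r (Suc k)) \<in> ldba_acc n" if "Suc k0 < k" "w k = i" for k
    using that after_i[OF that(1)] \<open>i < n\<close> by (auto simp: r_def ldba_acc_def)
  have "\<exists>\<^sub>\<infinity>k. (r k, w k, r (Suc k)) \<in> ldba_acc n"
    using INFM_conjI[OF inf MOST_ge_nat[of "Suc (Suc k0)"]] by (rule INFM_mono) (auto intro: acc)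
  moreover have "r 0 = 0" by (simp add: r_def)
  ultimately show "w \<in> nba_lang (ldba n)"
    using w trans unfolding nba_lang_def nba_accepting_run_def nba_run_def ldba_def by auto
qed

theorem mainTheorem5:
  shows "\<exists>L :: nat \<Rightarrow> nat oword set. \<forall>n \<ge> 2.
     L n \<subseteq> words {0..<n} \<and>
     (\<exists>(A :: (nat, nat) nba) Qd. is_ldba A Qd \<and> nba_alpha A = {0..<n} \<and>
         card (nba_states A) = 3 * n + 2 \<and> nba_lang A = L n) \<and>
     (\<forall>D :: (nat, nat) dpa. dpa_wf D \<and> dpa_alpha D = {0..<n} \<and> dpa_lang D = L n
         \<longrightarrow> card (dpa_states D) \<ge> fact n)"
proof (intro exI[of _ isolated_letter_lang] allI impI conjI)
  fix n :: nat
  show "isolated_letter_lang n \<subseteq> words {0..<n}"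
    by (auto simp: isolated_letter_lang_def)
  have "nba_lang (ldba n) = isolated_letter_lang n"
    using ldba_lang_subset ldba_lang_supset by blast
  then show "\<exists>(A :: (nat, nat) nba) Qd. is_ldba A Qd \<and> nba_alpha A = {0..<n} \<and>
      card (nba_states A) = 3 * n + 2 \<and> nba_lang A = isolated_letter_lang n"
    using is_ldba_ldba card_ldba_states by (intro exI[of _ "ldba n"] exI[of _ "{1..2 * n}"]) (simp add: ldba_def)
  fix D :: "(nat, nat) dpa"
  assume "dpa_wf D \<and> dpa_alpha D = {0..<n} \<and> dpa_lang D = isolated_letter_lang n"
  then show "card (dpa_states D) \<ge> fact n" using fact_le_card_dpa_states by blast
qed

end
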